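(* Let $F=(f_t)_{t\in\mathbb{R}}$ be a continuous flow on a compact metric space $X$ and $\phi\colon X\to\mathbb{R}$ continuous. Suppose $\mathcal{G}\subset X\times\mathbb{R}^+$ has tail (W)-specification at scale $\delta>0$, that $\gamma>2\delta$ and $\eta\ge0$, and that $\phi$ has the Bowen property on $\mathcal{G}$ at scale $\max\{\gamma/2,\eta\}$. Then there is $C_4$ such that for every $t\ge0$, $$\Lambda(\mathcal{G},\gamma,\eta,t)\le C_4e^{tP(\phi)}.$$
   Context: $d_t(x,y)=\sup_{s\in[0,t]}d(f_sx,f_sy)$, $B_t(x,r)=\{y:d_t(x,y)<r\}$; $(t,\delta)$-separated means $d_t(x,y)>\delta$ for distinct points. $\mathcal{C}_t=\{x:(x,t)\in\mathcal{C}\}$; $\Phi_\eta(x,t)=\sup_{y\in B_t(x,\eta)}\int_0^t\phi(f_sy)ds$; $\Lambda(\mathcal{C},\delta,\eta,t)=\sup\{\sum_{x\in E}e^{\Phi_\eta(x,t)}:E\subset\mathcal{C}_t\ (t,\delta)\text{-separated}\}$; $P(\phi)$ is the topological pressure of the flow. (W)-specification at scale $\delta$: there is $\tau>0$ such that for every $\{(x_i,t_i)\}_{i=1}^k$ in the collection there are $y$ and $\tau_i\in[0,\tau]$ with $d_{t_j}(f_{s_{j-1}+\tau_{j-1}}y,x_j)<\delta$ for all $j$ ($s_j=\sum_{i\le j}t_i+\sum_{i\le j-1}\tau_i$, $s_0=\tau_0=0$), with collections agreeing in the first $j$ entries having equal $\tau_i$ for $i<j$. Tail (W)-specification at scale $\delta$: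 there is $T_0>0$ such that $\mathcal{G}\cap(X\times[T_0,\infty))$ has (W)-specification at scale $\delta$. Bowen property at scale $r$ on $\mathcal{G}$: there is $K$ with $\sup_{y\in B_t(x,r)}|\Phi_0(x,t)-\Phi_0(y,t)|\le K$ for $(x,t)\in\mathcal{G}$. *)

theory Defs
  imports "HOL-Analysis.Analysis"
begin

definition continuous_flow :: "'a::metric_space set \<Rightarrow> (real \<Rightarrow> 'a \<Rightarrow> 'a) \<Rightarrow> bool" where
  "continuous_flow X f \<longleftrightarrow>
     (\<forall>t. f t ` X \<subseteq> X) \<and>
     (\<forall>x\<in>X. f 0 x = x) \<and>
     (\<forall>s t. \<forall>x\<in>X. f (s + t) x = f s (f t x)) \<and>
     continuous_on (UNIV \<times> X) (\<lambda>(t, x). f t x)"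

definition bowen_dist :: "(real \<Rightarrow> 'a::metric_space \<Rightarrow> 'a) \<Rightarrow> real \<Rightarrow> 'a \<Rightarrow> 'a \<Rightarrow> real" where
  "bowen_dist f t x y = (SUP s\<in>{0..t}. dist (f s x) (f s y))"

definition bowen_ball :: "'a::metric_space set \<Rightarrow> (real \<Rightarrow> 'a \<Rightarrow> 'a) \<Rightarrow> real \<Rightarrow> 'a \<Rightarrow> real \<Rightarrow> 'a set" where
  "bowen_ball X f t x r = {y\<in>X. bowen_dist f t x y < r}"

text \<open>\<open>\<Phi>_\<eta>(x,t) = sup_{y\<in>B_t(x,\<eta>)} \<integral>_0^t \<phi>(f_s y) ds\<close>; the point \<open>x\<close> itself is
  included so that \<open>\<Phi>_0(x,t) = \<integral>_0^t \<phi>(f_s x) ds\<close> (for \<open>\<eta> > 0\<close> this changes nothing).\<close>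
definition Phi :: "'a::metric_space set \<Rightarrow> (real \<Rightarrow> 'a \<Rightarrow> 'a) \<Rightarrow> ('a \<Rightarrow> real) \<Rightarrow> real \<Rightarrow> 'a \<Rightarrow> real \<Rightarrow> real" where
  "Phi X f \<phi> \<eta> x t = (SUP y\<in>insert x (bowen_ball X f t x \<eta>). integral {0..t} (\<lambda>s. \<phi> (f s y)))"

definition separated :: "(real \<Rightarrow> 'a::metric_space \<Rightarrow> 'a) \<Rightarrow> real \<Rightarrow> real \<Rightarrow> 'a set \<Rightarrow> bool" where
  "separated f t \<delta> E \<longleftrightarrow> (\<forall>x\<in>E. \<forall>y\<in>E. x \<noteq> y \<longrightarrow> bowen_dist f t x y > \<delta>)"

definition Lambda :: "'a::metric_space set \<Rightarrow> (real \<Rightarrow> 'a \<Rightarrow> 'a) \<Rightarrow> ('a \<Rightarrow> real) \<Rightarrow> ('a \<times> real) set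
                       \<Rightarrow> real \<Rightarrow> real \<Rightarrow> real \<Rightarrow> real" where
  "Lambda X f \<phi> C \<delta> \<eta> t =
     Sup {(\<Sum>x\<in>E. exp (Phi X f \<phi> \<eta> x t)) | E. finite E \<and> E \<subseteq> {x. (x, t) \<in> C} \<and> separated f t \<delta> E}"

definition top_pressure :: "'a::metric_space set \<Rightarrow> (real \<Rightarrow> 'a \<Rightarrow> 'a) \<Rightarrow> ('a \<Rightarrow> real) \<Rightarrow> ereal" where
  "top_pressure X f \<phi> =
     Lim (at_right (0::real))
       (\<lambda>\<delta>. Limsup at_top (\<lambda>t::real. ereal (ln (Lambda X f \<phi> (X \<times> {0..}) \<delta> 0 t) / t)))"

text \<open>A finite collection \<open>{(x_i,t_i)}_{i=1}^k\<close> is a list \<open>ps\<close>; \<open>tau ps i\<close> (0-indexed) is the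
  transition time \<open>\<tau>_{i+1}\<close> after the \<open>(i+1)\<close>-st segment.  Segment \<open>j\<close> (0-indexed) starts at
  time \<open>\<Sum>_{i<j} (t_i + \<tau>_i)\<close> along the orbit of \<open>y\<close>.\<close>
definition W_spec :: "'a::metric_space set \<Rightarrow> (real \<Rightarrow> 'a \<Rightarrow> 'a) \<Rightarrow> ('a \<times> real) set \<Rightarrow> real \<Rightarrow> bool" where
  "W_spec X f D \<delta> \<longleftrightarrow>
     (\<exists>\<tau>>0. \<exists>tau :: ('a \<times> real) list \<Rightarrow> nat \<Rightarrow> real.
        (\<forall>ps. set ps \<subseteq> D \<longrightarrow>
           (\<forall>i. i + 1 < length ps \<longrightarrow> tau ps i \<in> {0..\<tau>}) \<and>
           (\<exists>y\<in>X. \<forall>j<length ps.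
              bowen_dist f (snd (ps ! j))
                 (f (\<Sum>i<j. snd (ps ! i) + tau ps i) y) (fst (ps ! j)) < \<delta>)) \<and>
        (\<forall>ps qs j. set ps \<subseteq> D \<longrightarrow> set qs \<subseteq> D \<longrightarrow> take j ps = take j qs \<longrightarrow>
           (\<forall>i. i + 1 < j \<longrightarrow> tau ps i = tau qs i)))"

definition tail_W_spec :: "'a::metric_space set \<Rightarrow> (real \<Rightarrow> 'a \<Rightarrow> 'a) \<Rightarrow> ('a \<times> real) set \<Rightarrow> real \<Rightarrow> bool" where
  "tail_W_spec X f G \<delta> \<longleftrightarrow> (\<exists>T0>0. W_spec X f (G \<inter> (X \<times> {T0..})) \<delta>)"

definition bowen_property :: "'a::metric_space set \<Rightarrow> (real \<Rightarrow> 'a \<Rightarrow> 'a) \<Rightarrow> ('a \<Rightarrow> real) \<Rightarrow> ('a \<times> real) set \<Rightarrow> real \<Rightarrow> bool" where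
  "bowen_property X f \<phi> G r \<longleftrightarrow>
     (\<exists>K. \<forall>(x, t)\<in>G. \<forall>y\<in>bowen_ball X f t x r. \<bar>Phi X f \<phi> 0 x t - Phi X f \<phi> 0 y t\<bar> \<le> K)"

end

theory Submission
  imports Defs
begin

text \<open>
  Fix t \<ge> T0 and a (t, \<gamma>)-separated set E of points x with (x, t) \<in> G. For every n, specification
  glues each word x_1 ... x_n over E into a single orbit of length at most n (t + \<tau>) that
  \<delta>-shadows the segments (x_j, t) one after the other; by the Bowen property its weight is at
  least the product of the weights e^\<Phi>_\<eta>(x_j, t) times e^(-n (2K + \<tau> M)). Words whose transition
  times agree up to a small mesh \<rho> have (\<gamma> - 2\<delta>)/2-separated shadowing points, hence
  (\<Sum>_E e^\<Phi>_\<eta>)^n \<le> e^(n (2K + \<tau> M)) (\<lfloor>\<tau>/\<rho>\<rfloor> + 1)^n \<Lambda>(X, (\<gamma> - 2\<delta>)/2, 0, n (t + \<tau>)).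
  Taking logarithms and letting n \<rightarrow> \<infinity> along the times n (t + \<tau>) bounds log \<Sum>_E e^\<Phi>_\<eta> by a
  constant plus (t + \<tau>) P(\<phi>). For t < T0 the sums are bounded outright, since separated sets at
  bounded times have bounded cardinality.
\<close>

section \<open>Bowen distance, separated sets and words\<close>

lemma bowen_dist_self: "0 \<le> t \<Longrightarrow> bowen_dist f t x x = 0"
  unfolding bowen_dist_def by simp

lemma bowen_dist_commute: "bowen_dist f t x y = bowen_dist f t y x"
  unfolding bowen_dist_def by (simp add: dist_commute)

lemma bowen_dist_le:
  "0 \<le> t \<Longrightarrow> (\<And>s. s \<in> {0..t} \<Longrightarrow> dist (f s x) (f s y) \<le> c) \<Longrightarrow> bowen_dist f t x y \<le> c"
  unfolding bowen_dist_def by (rule cSUP_least) auto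

lemma separated_mono: "separated f t \<delta>' E \<Longrightarrow> \<delta> \<le> \<delta>' \<Longrightarrow> separated f t \<delta> E"
  unfolding separated_def by force

lemma Lambda_leI:
  assumes "\<And>E. finite E \<Longrightarrow> E \<subseteq> {x. (x, t) \<in> C} \<Longrightarrow> separated f t \<delta> E \<Longrightarrow>
             (\<Sum>x\<in>E. exp (Phi X f \<phi> \<eta> x t)) \<le> c"
  shows "Lambda X f \<phi> C \<delta> \<eta> t \<le> c"
  unfolding Lambda_def
proof (rule cSup_least)
  show "{(\<Sum>x\<in>E. exp (Phi X f \<phi> \<eta> x t)) | E. finite E \<and> E \<subseteq> {x. (x, t) \<in> C} \<and> separated f t \<delta> E} \<noteq> {}"
    by (auto simp: separated_def intro!: exI[of _ "{}"])
qed (use assms in auto)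

lemma abs_diff_less_if_nat_floor_eq:
  fixes a b \<rho> :: real
  assumes "0 \<le> a" "0 \<le> b" "0 < \<rho>" "nat \<lfloor>a / \<rho>\<rfloor> = nat \<lfloor>b / \<rho>\<rfloor>"
  shows "\<bar>a - b\<bar> < \<rho>"
proof -
  have floor_eq: "\<lfloor>a / \<rho>\<rfloor> = \<lfloor>b / \<rho>\<rfloor>"
    using assms by (simp add: eq_nat_nat_iff)
  have "of_int \<lfloor>a / \<rho>\<rfloor> \<le> a / \<rho>" "a / \<rho> < of_int \<lfloor>a / \<rho>\<rfloor> + 1"
    "of_int \<lfloor>b / \<rho>\<rfloor> \<le> b / \<rho>" "b / \<rho> < of_int \<lfloor>b / \<rho>\<rfloor> + 1"
    by linarith+
  then have "\<bar>a / \<rho> - b / \<rho>\<bar> < 1"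
    unfolding floor_eq by linarith
  also have "\<bar>a / \<rho> - b / \<rho>\<bar> = \<bar>a - b\<bar> / \<rho>"
    using assms(3) by (simp add: diff_divide_distrib[symmetric])
  finally show ?thesis
    using assms(3) by simp
qed

lemma first_difference:
  assumes "length xs = length ys" "xs \<noteq> ys"
  shows "\<exists>j<length xs. take j xs = take j ys \<and> xs ! j \<noteq> ys ! j"
  using assms
proof (induction xs ys rule: list_induct2)
  case (Cons x xs y ys)
  show ?case
  proof (cases "x = y")
    case True
    with Cons obtain j where "j < length xs" "take j xs = take j ys" "xs ! j \<noteq> ys ! j"
      by auto
    with True show ?thesis
      by (intro exI[of _ "Suc j"]) auto
  next
    case False
    then show ?thesis
      by (intro exI[of _ 0]) simp
  qed
qed simp

lemma finite_card_le_if_net: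
  fixes E K :: "'a::metric_space set"
  assumes "finite K" "E \<subseteq> (\<Union>c\<in>K. ball c (r / 2))"
    and "\<And>x y. x \<in> E \<Longrightarrow> y \<in> E \<Longrightarrow> dist x y < r \<Longrightarrow> x = y"
  shows "finite E \<and> card E \<le> card K"
proof -
  define centre where "centre x = (SOME c. c \<in> K \<and> x \<in> ball c (r / 2))" for x
  have centre: "centre x \<in> K \<and> x \<in> ball (centre x) (r / 2)" if x: "x \<in> E" for x
  proof -
    obtain c where "c \<in> K \<and> x \<in> ball c (r / 2)"
      using assms(2) x by blast
    then show ?thesis
      unfolding centre_def by (rule someI)
  qed
  have "inj_on centre E"
  proof (rule inj_onI)
    fix x y assume xy: "x \<in> E" "y \<in> E" "centre x = centre y"
    then have "dist (centre x) x < r / 2" "dist (centre x) y < r / 2"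
      using centre[of x] centre[of y] by auto
    then have "dist x y < r"
      by (rule dist_triangle_half_r)
    with xy show "x = y"
      by (intro assms(3))
  qed
  moreover have "centre ` E \<subseteq> K"
    using centre by auto
  ultimately show ?thesis
    using inj_on_finite[of centre E K] card_inj_on_le[of centre E K] assms(1) by simp
qed

lemma mult_ln_le_ln_if_power_le:
  fixes S m c L :: real
  assumes "0 < S" "0 < m" "exp (- (n * c)) * S ^ n \<le> m ^ n * L"
  shows "n * (ln S - c - ln m) \<le> ln L"
proof -
  have "0 < exp (- (n * c)) * S ^ n"
    using assms(1) by simp
  then have "0 < L"
    using assms(2,3) by (metis less_le_trans zero_less_mult_pos zero_less_power)
  have "n * (ln S - c) = ln (exp (- (n * c)) * S ^ n)"
    using assms(1) by (simp add: ln_mult ln_realpow algebra_simps)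
  also have "\<dots> \<le> ln (m ^ n * L)"
    using assms by (intro ln_mono) simp_all
  also have "\<dots> = n * ln m + ln L"
    using assms(2) \<open>0 < L\<close> by (simp add: ln_mult ln_realpow)
  finally show ?thesis
    by (simp add: algebra_simps)
qed

definition words :: "'a set \<Rightarrow> nat \<Rightarrow> 'a list set" where
  "words E n = {xs. set xs \<subseteq> E \<and> length xs = n}"

lemma finite_words: "finite E \<Longrightarrow> finite (words E n)"
  unfolding words_def by (rule finite_lists_length_eq)

lemma card_words: "finite E \<Longrightarrow> card (words E n) = card E ^ n"
  unfolding words_def by (rule card_lists_length_eq)

lemma power_sum_eq_sum_words:
  fixes h :: "'a \<Rightarrow> 'b::comm_semiring_1"
  assumes "finite E"
  shows "sum h E ^ n = (\<Sum>xs\<in>words E n. \<Prod>j<n. h (xs ! j))"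
proof (induction n)
  case 0
  have "words E 0 = {[]}"
    by (auto simp: words_def)
  then show ?case by simp
next
  case (Suc n)
  have words_Suc: "words E (Suc n) = (\<lambda>(x, xs). x # xs) ` (E \<times> words E n)"
    by (auto simp: words_def length_Suc_conv)
  have inj: "inj_on (\<lambda>(x, xs). x # xs) (E \<times> words E n)"
    by (auto simp: inj_on_def)
  have "(\<Sum>xs\<in>words E (Suc n). \<Prod>j<Suc n. h (xs ! j))
      = (\<Sum>(x, xs)\<in>E \<times> words E n. h x * (\<Prod>j<n. h (xs ! j)))"
    unfolding words_Suc sum.reindex[OF inj]
    by (simp add: case_prod_beta del: prod.lessThan_Suc add: prod.lessThan_Suc_shift)
  also have "\<dots> = (\<Sum>x\<in>E. h x * (\<Sum>xs\<in>words E n. \<Prod>j<n. h (xs ! j)))"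
    by (simp add: sum.cartesian_product sum_distrib_left)
  also have "\<dots> = sum h E * sum h E ^ n"
    by (simp add: Suc.IH sum_distrib_right)
  finally show ?case by simp
qed

lemma sum_integral_windows_le:
  fixes g :: "real \<Rightarrow> real" and a :: "nat \<Rightarrow> real"
  assumes g: "continuous_on UNIV g" "\<And>s. 0 \<le> g s" and "0 \<le> t" "0 \<le> a 0"
    and windows: "\<And>j. j < n \<Longrightarrow> a j + t \<le> a (Suc j)"
  shows "(\<Sum>j<n. integral {a j..a j + t} g) \<le> integral {0..a n} g"
proof -
  have int: "g integrable_on {u..v}" for u v
    by (rule integrable_continuous_interval[OF continuous_on_subset[OF g(1)]]) simp
  have "0 \<le> a n \<and> (\<Sum>j<n. integral {a j..a j + t} g) \<le> integral {0..a n} g"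
    using windows
  proof (induction n)
    case (Suc n)
    then have IH: "0 \<le> a n" "(\<Sum>j<n. integral {a j..a j + t} g) \<le> integral {0..a n} g"
      and step: "a n + t \<le> a (Suc n)"
      by auto
    have "integral {a n..a n + t} g \<le> integral {a n..a (Suc n)} g"
      using step g(2) by (intro integral_subset_le int) auto
    moreover have "integral {0..a n} g + integral {a n..a (Suc n)} g = integral {0..a (Suc n)} g"
      using IH(1) step \<open>0 \<le> t\<close> by (intro Henstock_Kurzweil_Integration.integral_combine int) auto
    ultimately show ?case
      using IH step \<open>0 \<le> t\<close> by simp
  qed (simp add: \<open>0 \<le> a 0\<close> integral_nonneg int g(2))
  then show ?thesis ..
qed

lemma le_Limsup_at_top_if_cofinal:
  fixes h :: "real \<Rightarrow> 'a::complete_linorder"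
  assumes "\<And>N. \<exists>T\<ge>N. c \<le> h T"
  shows "c \<le> Limsup at_top h"
proof (rule ccontr)
  assume "\<not> c \<le> Limsup at_top h"
  then have "\<forall>\<^sub>F T in at_top. h T < c"
    by (intro Limsup_lessD) simp
  then obtain N where "\<And>T. N \<le> T \<Longrightarrow> h T < c"
    by (auto simp: eventually_at_top_linorder)
  with assms[of N] show False
    by (auto simp: not_le[symmetric])
qed

section \<open>Flows on compact spaces\<close>

locale compact_flow =
  fixes X :: "'a::metric_space set" and f :: "real \<Rightarrow> 'a \<Rightarrow> 'a" and \<phi> :: "'a \<Rightarrow> real" and M :: real
  assumes compact: "compact X" and flow: "continuous_flow X f" and continuous_phi: "continuous_on X \<phi>"
    and phi_bound: "\<And>z. z \<in> X \<Longrightarrow> \<bar>\<phi> z\<bar> \<le> M"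
begin

lemma flow_in: "x \<in> X \<Longrightarrow> f t x \<in> X"
  using flow unfolding continuous_flow_def by blast

lemma flow_add: "x \<in> X \<Longrightarrow> f (s + t) x = f s (f t x)"
  using flow unfolding continuous_flow_def by blast

lemma flow_zero: "x \<in> X \<Longrightarrow> f 0 x = x"
  using flow unfolding continuous_flow_def by blast

lemma continuous_on_flow: "continuous_on (UNIV \<times> X) (\<lambda>(t, x). f t x)"
  using flow unfolding continuous_flow_def by blast

lemma continuous_on_phi_orbit:
  assumes "x \<in> X"
  shows "continuous_on UNIV (\<lambda>s. \<phi> (f s x))"
proof -
  have "continuous_on UNIV ((\<lambda>(t, x). f t x) \<circ> (\<lambda>s. (s, x)))"
    by (rule continuous_on_compose)
      (auto intro!: continuous_intros continuous_on_subset[OF continuous_on_flow] simp: assms)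
  then have "continuous_on UNIV (\<lambda>s. f s x)"
    by (simp add: o_def)
  then show ?thesis
    using continuous_on_compose2[OF continuous_phi] assms flow_in by blast
qed

lemma integrable_phi_orbit: "x \<in> X \<Longrightarrow> (\<lambda>s. \<phi> (f s x)) integrable_on {a..b}"
  by (rule integrable_continuous_interval[OF continuous_on_subset[OF continuous_on_phi_orbit]]) auto

lemma dist_le_bowen_dist:
  assumes "x \<in> X" "y \<in> X" "s \<in> {0..t}"
  shows "dist (f s x) (f s y) \<le> bowen_dist f t x y"
proof -
  obtain B where "\<forall>x\<in>X. \<forall>y\<in>X. dist x y \<le> B"
    using compact_imp_bounded[OF compact] by (meson bounded_two_points)
  then have "bdd_above ((\<lambda>s. dist (f s x) (f s y)) ` {0..t})"
    using assms flow_in by (auto intro!: bdd_aboveI)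
  then show ?thesis
    unfolding bowen_dist_def using assms(3) by (rule cSUP_upper2) simp
qed

lemma bowen_dist_nonneg: "x \<in> X \<Longrightarrow> y \<in> X \<Longrightarrow> 0 \<le> t \<Longrightarrow> 0 \<le> bowen_dist f t x y"
  using dist_le_bowen_dist[of x y 0 t] by (meson atLeastAtMost_iff order.refl zero_le_dist order_trans)

lemma exists_dist_gt_if_bowen_dist_gt:
  assumes "x \<in> X" "y \<in> X" "0 \<le> t" "c < bowen_dist f t x y"
  obtains s where "s \<in> {0..t}" "c < dist (f s x) (f s y)"
proof -
  have "\<not> (\<forall>s\<in>{0..t}. dist (f s x) (f s y) \<le> c)"
  proof
    assume "\<forall>s\<in>{0..t}. dist (f s x) (f s y) \<le> c"
    then have "bowen_dist f t x y \<le> c"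
      using assms(3) by (intro bowen_dist_le) auto
    with assms(4) show False
      by simp
  qed
  then show ?thesis
    using that by (auto simp: not_le)
qed

lemma Phi_zero: "x \<in> X \<Longrightarrow> 0 \<le> t \<Longrightarrow> Phi X f \<phi> 0 x t = integral {0..t} (\<lambda>s. \<phi> (f s x))"
  proof -
  assume "x \<in> X" "0 \<le> t"
  then have "bowen_ball X f t x 0 = {}"
    using bowen_dist_nonneg unfolding bowen_ball_def by (auto simp: not_less)
  then show ?thesis
    unfolding Phi_def by simp
qed

lemma Phi_le:
  assumes "x \<in> X" "0 \<le> t"
  shows "Phi X f \<phi> \<eta> x t \<le> t * M"
  unfolding Phi_def
proof (rule cSUP_least)
  fix y assume "y \<in> insert x (bowen_ball X f t x \<eta>)"
  then have "y \<in> X"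
    using assms(1) by (auto simp: bowen_ball_def)
  then have "integral {0..t} (\<lambda>s. \<phi> (f s y)) \<le> integral {0..t} (\<lambda>s. M)"
    using phi_bound flow_in by (intro integral_le integrable_phi_orbit) (auto simp: abs_le_iff)
  then show "integral {0..t} (\<lambda>s. \<phi> (f s y)) \<le> t * M"
    using assms(2) by simp
qed simp

lemma integral_orbit_window:
  assumes "y \<in> X" "0 \<le> L"
  shows "integral {a..a + L} (\<lambda>s. \<phi> (f s y) + M) = Phi X f \<phi> 0 (f a y) L + L * M"
proof -
  have "integral {a..a + L} (\<lambda>s. \<phi> (f s y) + M) = integral {a..a + L} (\<lambda>s. \<phi> (f s y)) + L * M"
    using assms by (subst integral_add) (auto intro: integrable_phi_orbit)
  also have "integral {a..a + L} (\<lambda>s. \<phi> (f s y)) = integral {a - a..a + L - a} (\<lambda>s. \<phi> (f (s + a) y))"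
    by (rule integral_shift_real_ivl[symmetric])
  also have "\<dots> = Phi X f \<phi> 0 (f a y) L"
    using assms by (simp add: flow_add Phi_zero flow_in)
  finally show ?thesis .
qed

lemma Phi_le_Phi_zero_if_bowen:
  assumes bowen: "\<forall>(x, t)\<in>G. \<forall>y\<in>bowen_ball X f t x r. \<bar>Phi X f \<phi> 0 x t - Phi X f \<phi> 0 y t\<bar> \<le> K"
    and "G \<subseteq> X \<times> {0..}" "(x, t) \<in> G" "\<eta> \<le> r" "z \<in> X" "bowen_dist f t x z < r"
  shows "Phi X f \<phi> \<eta> x t \<le> Phi X f \<phi> 0 z t + 2 * K"
proof -
  have x: "x \<in> X" "0 \<le> t"
    using assms(2,3) by auto
  have close: "Phi X f \<phi> 0 x t - K \<le> Phi X f \<phi> 0 y t \<and> Phi X f \<phi> 0 y t \<le> Phi X f \<phi> 0 x t + K"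
    if "y \<in> X" "bowen_dist f t x y < r" for y
    using bowen assms(3) that unfolding bowen_ball_def abs_le_iff by fastforce
  have "0 < r"
    using bowen_dist_nonneg[OF x(1) assms(5) x(2)] assms(6) by linarith
  then have x_close: "bowen_dist f t x x < r"
    using bowen_dist_self[OF x(2), of f x] by simp
  have "Phi X f \<phi> \<eta> x t \<le> Phi X f \<phi> 0 x t + K"
    unfolding Phi_def[of X f \<phi> \<eta>]
  proof (rule cSUP_least)
    fix y assume "y \<in> insert x (bowen_ball X f t x \<eta>)"
    then have "y \<in> X" "bowen_dist f t x y < r"
      using x(1) x_close assms(4) by (auto simp: bowen_ball_def)
    then show "integral {0..t} (\<lambda>s. \<phi> (f s y)) \<le> Phi X f \<phi> 0 x t + K"
      using close Phi_zero x(2) by metis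
  qed simp
  then show ?thesis
    using close[OF assms(5,6)] by linarith
qed

lemma flow_uniformly_continuous: "uniformly_continuous_on ({a..b} \<times> X) (\<lambda>(t, x). f t x)"
  by (rule compact_uniformly_continuous)
    (auto intro: continuous_on_subset[OF continuous_on_flow] compact_Times compact)

lemma flow_close_for_small_time:
  assumes "0 < \<epsilon>"
  obtains \<rho> where "0 < \<rho>" "\<forall>z\<in>X. \<forall>h. \<bar>h\<bar> < \<rho> \<longrightarrow> dist (f h z) z < \<epsilon>"
proof -
  obtain d where d: "0 < d" and close: "\<forall>p\<in>{-1..1} \<times> X. \<forall>q\<in>{-1..1} \<times> X. dist q p < d \<longrightarrow>
      dist ((\<lambda>(t, x). f t x) q) ((\<lambda>(t, x). f t x) p) < \<epsilon>"
    using flow_uniformly_continuous[of "-1" 1] assms unfolding uniformly_continuous_on_def by force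
  have "dist (f h z) z < \<epsilon>" if "z \<in> X" "\<bar>h\<bar> < min d 1" for z h
  proof -
    have "h \<in> {-1..1}" "dist (h, z) (0, z) < d"
      using that by (auto simp: dist_Pair_Pair dist_real_def)
    then show ?thesis
      using close[rule_format, of "(0, z)" "(h, z)"] that(1) flow_zero by auto
  qed
  with d that[of "min d 1"] show ?thesis
    by auto
qed

lemma separated_card_bounded:
  assumes "0 < \<epsilon>"
  obtains N where "\<And>t E. t \<in> {0..T} \<Longrightarrow> E \<subseteq> X \<Longrightarrow> separated f t \<epsilon> E \<Longrightarrow> finite E \<and> card E \<le> N"
proof -
  obtain d where d: "0 < d" and close: "\<forall>p\<in>{0..T} \<times> X. \<forall>q\<in>{0..T} \<times> X. dist q p < d \<longrightarrow>
      dist ((\<lambda>(t, x). f t x) q) ((\<lambda>(t, x). f t x) p) < \<epsilon>"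
    using flow_uniformly_continuous[of 0 T] assms unfolding uniformly_continuous_on_def by force
  have bowen_close: "bowen_dist f t x y \<le> \<epsilon>" if "x \<in> X" "y \<in> X" "dist x y < d" "t \<in> {0..T}" for x y t
  proof (rule bowen_dist_le)
    fix s assume "s \<in> {0..t}"
    then have "dist (f s x) (f s y) < \<epsilon>"
      using that close[rule_format, of "(s, y)" "(s, x)"] by (simp add: dist_Pair_Pair)
    then show "dist (f s x) (f s y) \<le> \<epsilon>"
      by simp
  qed (use that in simp)
  have "X \<subseteq> (\<Union>c\<in>X. ball c (d / 2))"
    using d by auto
  then obtain K where K: "K \<subseteq> X" "finite K" "X \<subseteq> (\<Union>c\<in>K. ball c (d / 2))"
    using compactE_image[OF compact, of X "\<lambda>c. ball c (d / 2)"] by auto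
  have "finite E \<and> card E \<le> card K" if t: "t \<in> {0..T}" and E: "E \<subseteq> X" "separated f t \<epsilon> E" for t E
  proof (rule finite_card_le_if_net[OF K(2)])
    show "E \<subseteq> (\<Union>c\<in>K. ball c (d / 2))"
      using E(1) K(3) by blast
    fix x y assume xy: "x \<in> E" "y \<in> E" "dist x y < d"
    then have "bowen_dist f t x y \<le> \<epsilon>"
      using bowen_close E(1) t by blast
    then show "x = y"
      using E(2) xy unfolding separated_def by force
  qed
  then show ?thesis
    by (rule that)
qed

lemma dist_gt_if_shadowing:
  assumes \<rho>: "\<forall>z\<in>X. \<forall>h. \<bar>h\<bar> < \<rho> \<longrightarrow> dist (f h z) z < \<epsilon>" and "y' \<in> X"
    and "dist (f u y) a < \<delta>" "dist (f u' y') b < \<delta>" "\<bar>u' - u\<bar> < \<rho>"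
  shows "dist a b - 2 * \<delta> - \<epsilon> < dist (f u y) (f u y')"
proof -
  have "f u' y' = f (u' - u) (f u y')"
    using flow_add[OF assms(2), of "u' - u" u] by simp
  then have "dist (f u' y') (f u y') < \<epsilon>"
    using \<rho> assms(5) flow_in[OF assms(2)] by simp
  moreover have "dist a b \<le> dist (f u y) a + dist (f u y) b"
    by (rule dist_triangle3)
  moreover have "dist (f u y) b \<le> dist (f u y) (f u y') + dist (f u y') b"
    by (rule dist_triangle)
  moreover have "dist (f u y') b \<le> dist (f u' y') (f u y') + dist (f u' y') b"
    by (rule dist_triangle3)
  ultimately show ?thesis
    using assms(3,4) by linarith
qed

lemma sum_weights_le_exp_bounded_times:
  assumes "0 < \<gamma>"
  obtains C where "\<And>t E. t \<in> {0..T} \<Longrightarrow> E \<subseteq> X \<Longrightarrow> separated f t \<gamma> E \<Longrightarrow>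
    (\<Sum>x\<in>E. exp (Phi X f \<phi> \<eta> x t)) \<le> C * exp (t * p)"
proof -
  obtain N where N: "\<And>t E. t \<in> {0..T} \<Longrightarrow> E \<subseteq> X \<Longrightarrow> separated f t \<gamma> E \<Longrightarrow> finite E \<and> card E \<le> N"
    using separated_card_bounded[OF assms] by blast
  have "(\<Sum>x\<in>E. exp (Phi X f \<phi> \<eta> x t)) \<le> N * exp (T * \<bar>M\<bar> + T * \<bar>p\<bar>) * exp (t * p)"
    if t: "t \<in> {0..T}" and E: "E \<subseteq> X" "separated f t \<gamma> E" for t E
  proof -
    have "- (t * p) \<le> t * \<bar>p\<bar>" "t * M \<le> t * \<bar>M\<bar>"
      using t mult_left_mono[of "- p" "\<bar>p\<bar>" t] mult_left_mono[of M "\<bar>M\<bar>" t] by simp_all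
    moreover have "t * \<bar>p\<bar> \<le> T * \<bar>p\<bar>" "t * \<bar>M\<bar> \<le> T * \<bar>M\<bar>"
      using t by (simp_all add: mult_right_mono)
    ultimately have "- (t * p) \<le> T * \<bar>p\<bar>" "t * M \<le> T * \<bar>M\<bar>"
      by linarith+
    then have "exp (Phi X f \<phi> \<eta> x t) \<le> exp (T * \<bar>M\<bar> + T * \<bar>p\<bar>) * exp (t * p)" if "x \<in> E" for x
    proof -
      have "Phi X f \<phi> \<eta> x t \<le> T * \<bar>M\<bar> + T * \<bar>p\<bar> + t * p"
        using Phi_le[of x t \<eta>] that E(1) t \<open>- (t * p) \<le> T * \<bar>p\<bar>\<close> \<open>t * M \<le> T * \<bar>M\<bar>\<close> by auto
      then show ?thesis
        by (simp flip: exp_add)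
    qed
    then have "(\<Sum>x\<in>E. exp (Phi X f \<phi> \<eta> x t)) \<le> card E * (exp (T * \<bar>M\<bar> + T * \<bar>p\<bar>) * exp (t * p))"
      by (rule sum_bounded_above)
    also have "\<dots> \<le> N * (exp (T * \<bar>M\<bar> + T * \<bar>p\<bar>) * exp (t * p))"
      using N[OF t E] by (intro mult_right_mono) auto
    finally show ?thesis
      by (simp add: mult.assoc)
  qed
  then show ?thesis
    by (rule that)
qed

abbreviation Lambda_full :: "real \<Rightarrow> real \<Rightarrow> real" where
  "Lambda_full \<delta> T \<equiv> Lambda X f \<phi> (X \<times> {0..}) \<delta> 0 T"

lemma bdd_above_Lambda_full_sums:
  assumes "0 < \<delta>"
  shows "bdd_above {(\<Sum>x\<in>E. exp (Phi X f \<phi> 0 x T)) | E.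
    finite E \<and> E \<subseteq> {x. (x, T) \<in> X \<times> {0..}} \<and> separated f T \<delta> E}"
proof (cases "0 \<le> T")
  case True
  obtain C where "\<And>t E. t \<in> {0..T} \<Longrightarrow> E \<subseteq> X \<Longrightarrow> separated f t \<delta> E \<Longrightarrow>
      (\<Sum>x\<in>E. exp (Phi X f \<phi> 0 x t)) \<le> C * exp (t * 0)"
    using sum_weights_le_exp_bounded_times[OF assms] by blast
  with True show ?thesis
    by (intro bdd_aboveI[of _ C]) auto
qed (auto intro: bdd_aboveI[of _ 0])

lemma sum_le_Lambda_full:
  assumes "0 < \<delta>" "0 \<le> T" "finite E" "E \<subseteq> X" "separated f T \<delta> E"
  shows "(\<Sum>x\<in>E. exp (Phi X f \<phi> 0 x T)) \<le> Lambda_full \<delta> T"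
  unfolding Lambda_def using assms by (intro cSup_upper[OF _ bdd_above_Lambda_full_sums]) auto

lemma Lambda_full_pos:
  assumes "X \<noteq> {}" "0 < \<delta>" "0 \<le> T"
  shows "0 < Lambda_full \<delta> T"
proof -
  obtain x where "x \<in> X"
    using assms(1) by blast
  then have "exp (Phi X f \<phi> 0 x T) \<le> Lambda_full \<delta> T"
    using sum_le_Lambda_full[of \<delta> T "{x}"] assms by (simp add: separated_def)
  then show ?thesis
    by (rule less_le_trans[OF exp_gt_zero])
qed

lemma Lambda_full_antimono:
  assumes "0 < \<delta>" "\<delta> \<le> \<delta>'"
  shows "Lambda_full \<delta>' T \<le> Lambda_full \<delta> T"
  unfolding Lambda_def
proof (rule cSup_subset_mono)
  show "{(\<Sum>x\<in>E. exp (Phi X f \<phi> 0 x T)) | E. finite E \<and> E \<subseteq> {x. (x, T) \<in> X \<times> {0..}} \<and> separated f T \<delta>' E} \<noteq> {}"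
    by (auto simp: separated_def intro!: exI[of _ "{}"])
next
  show "bdd_above {(\<Sum>x\<in>E. exp (Phi X f \<phi> 0 x T)) | E. finite E \<and> E \<subseteq> {x. (x, T) \<in> X \<times> {0..}} \<and> separated f T \<delta> E}"
    by (rule bdd_above_Lambda_full_sums[OF assms(1)])
qed (use separated_mono[OF _ assms(2)] in blast)

definition pressure_at_scale :: "real \<Rightarrow> ereal" where
  "pressure_at_scale \<delta> = Limsup at_top (\<lambda>T. ereal (ln (Lambda_full \<delta> T) / T))"

lemma pressure_at_scale_antimono:
  assumes "X \<noteq> {}" "0 < \<delta>" "\<delta> \<le> \<delta>'"
  shows "pressure_at_scale \<delta>' \<le> pressure_at_scale \<delta>"
  unfolding pressure_at_scale_def
proof (rule Limsup_mono)
  show "\<forall>\<^sub>F T in at_top. ereal (ln (Lambda_full \<delta>' T) / T) \<le> ereal (ln (Lambda_full \<delta> T) / T)"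
    using eventually_gt_at_top[of 0]
  proof eventually_elim
    case (elim T)
    have "ln (Lambda_full \<delta>' T) \<le> ln (Lambda_full \<delta> T)"
      using Lambda_full_antimono[OF assms(2,3)] Lambda_full_pos assms elim by simp
    with elim show ?case
      by (simp add: divide_right_mono)
  qed
qed

lemma top_pressure_eq_SUP:
  assumes "X \<noteq> {}"
  shows "top_pressure X f \<phi> = (SUP \<delta>\<in>{0<..}. pressure_at_scale \<delta>)"
proof -
  define L where "L = (SUP \<delta>\<in>{0<..}. pressure_at_scale \<delta>)"
  have "(pressure_at_scale \<longlongrightarrow> L) (at_right 0)"
  proof (rule order_tendstoI)
    fix a assume "a < L"
    then obtain d where d: "0 < d" "a < pressure_at_scale d"
      unfolding L_def by (auto simp: less_SUP_iff)
    then have "a < pressure_at_scale \<delta>" if "0 < \<delta>" "\<delta> < d" for \<delta>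
      using pressure_at_scale_antimono[OF assms, of \<delta> d] that by simp
    with d(1) show "\<forall>\<^sub>F \<delta> in at_right 0. a < pressure_at_scale \<delta>"
      unfolding eventually_at_right_field by blast
  next
    fix a assume "L < a"
    then have "pressure_at_scale \<delta> < a" if "0 < \<delta>" for \<delta>
      using SUP_upper[of \<delta> "{0<..}" pressure_at_scale] that unfolding L_def by simp
    then show "\<forall>\<^sub>F \<delta> in at_right 0. pressure_at_scale \<delta> < a"
      unfolding eventually_at_right_field by (intro exI[of _ 1]) simp
  qed
  then show ?thesis
    unfolding top_pressure_def pressure_at_scale_def[symmetric] L_def
    by (rule tendsto_Lim[OF trivial_limit_at_right_real])
qed

lemma pressure_at_scale_le_top_pressure:
  "X \<noteq> {} \<Longrightarrow> 0 < \<delta> \<Longrightarrow> pressure_at_scale \<delta> \<le> top_pressure X f \<phi>"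
  by (simp add: top_pressure_eq_SUP SUP_upper)

end

section \<open>Gluing orbit segments by specification\<close>

locale specified_flow = compact_flow +
  fixes G :: "('a \<times> real) set" and \<delta> T0 \<tau> :: real
    and tau :: "('a \<times> real) list \<Rightarrow> nat \<Rightarrow> real"
  assumes G_subset: "G \<subseteq> X \<times> {0..}" and T0_pos: "0 < T0" and \<tau>_pos: "0 < \<tau>"
    and transition_time_bounds: "\<And>ps i. set ps \<subseteq> G \<inter> (X \<times> {T0..}) \<Longrightarrow> i + 1 < length ps \<Longrightarrow>
      tau ps i \<in> {0..\<tau>}"
    and shadowing: "\<And>ps. set ps \<subseteq> G \<inter> (X \<times> {T0..}) \<Longrightarrow> \<exists>y\<in>X. \<forall>j<length ps.
      bowen_dist f (snd (ps ! j)) (f (\<Sum>i<j. snd (ps ! i) + tau ps i) y) (fst (ps ! j)) < \<delta>"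
    and transition_times_agree: "\<And>ps qs j i. set ps \<subseteq> G \<inter> (X \<times> {T0..}) \<Longrightarrow>
      set qs \<subseteq> G \<inter> (X \<times> {T0..}) \<Longrightarrow> take j ps = take j qs \<Longrightarrow> i + 1 < j \<Longrightarrow> tau ps i = tau qs i"
begin

definition segments :: "real \<Rightarrow> 'a list \<Rightarrow> ('a \<times> real) list" where
  "segments t xs = map (\<lambda>x. (x, t)) xs"

definition start_time :: "real \<Rightarrow> 'a list \<Rightarrow> nat \<Rightarrow> real" where
  "start_time t xs j = (\<Sum>i<j. t + tau (segments t xs) i)"

definition shadow :: "real \<Rightarrow> 'a list \<Rightarrow> 'a" where
  "shadow t xs = (SOME y. y \<in> X \<and> (\<forall>j<length xs. bowen_dist f t (f (start_time t xs j) y) (xs ! j) < \<delta>))"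

text \<open>Transition times rounded down to the mesh \<open>\<rho>\<close>; there are at most \<open>(\<lfloor>\<tau> / \<rho>\<rfloor> + 1)^(n - 1)\<close>
  cells for words of length \<open>n\<close>.\<close>

definition transition_cell :: "real \<Rightarrow> real \<Rightarrow> 'a list \<Rightarrow> nat list" where
  "transition_cell \<rho> t xs = map (\<lambda>i. nat \<lfloor>tau (segments t xs) i / \<rho>\<rfloor>) [0..<length xs - 1]"

lemma set_segments_subset:
  "set xs \<subseteq> {x. (x, t) \<in> G} \<Longrightarrow> T0 \<le> t \<Longrightarrow> set (segments t xs) \<subseteq> G \<inter> (X \<times> {T0..})"
  using G_subset by (auto simp: segments_def)

lemma transition_time_segments:
  "set xs \<subseteq> {x. (x, t) \<in> G} \<Longrightarrow> T0 \<le> t \<Longrightarrow> Suc i < length xs \<Longrightarrow> tau (segments t xs) i \<in> {0..\<tau>}"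
  using transition_time_bounds[OF set_segments_subset] by (simp add: segments_def)

lemma start_time_Suc: "start_time t xs (Suc j) = start_time t xs j + t + tau (segments t xs) j"
  by (simp add: start_time_def)

lemma shadow_shadows:
  assumes "set xs \<subseteq> {x. (x, t) \<in> G}" "T0 \<le> t"
  shows "shadow t xs \<in> X \<and> (\<forall>j<length xs. bowen_dist f t (f (start_time t xs j) (shadow t xs)) (xs ! j) < \<delta>)"
proof -
  obtain y where y: "y \<in> X" "\<forall>j<length (segments t xs). bowen_dist f (snd (segments t xs ! j))
      (f (\<Sum>i<j. snd (segments t xs ! i) + tau (segments t xs) i) y) (fst (segments t xs ! j)) < \<delta>"
    using shadowing[OF set_segments_subset[OF assms]] by blast
  have "(\<Sum>i<j. snd (segments t xs ! i) + tau (segments t xs) i) = start_time t xs j" if "j < length xs" for j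
    unfolding start_time_def using that by (intro sum.cong) (auto simp: segments_def)
  with y have "y \<in> X \<and> (\<forall>j<length xs. bowen_dist f t (f (start_time t xs j) y) (xs ! j) < \<delta>)"
    by (auto simp: segments_def)
  then show ?thesis
    unfolding shadow_def by (rule someI)
qed

lemma shadow_in: "set xs \<subseteq> {x. (x, t) \<in> G} \<Longrightarrow> T0 \<le> t \<Longrightarrow> shadow t xs \<in> X"
  using shadow_shadows by blast

lemma dist_shadow_less:
  assumes "set xs \<subseteq> {x. (x, t) \<in> G}" "T0 \<le> t" "j < length xs" "s \<in> {0..t}"
  shows "dist (f (s + start_time t xs j) (shadow t xs)) (f s (xs ! j)) < \<delta>"
proof -
  have y: "shadow t xs \<in> X" "bowen_dist f t (f (start_time t xs j) (shadow t xs)) (xs ! j) < \<delta>"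
    using shadow_shadows[OF assms(1,2)] assms(3) by auto
  have "xs ! j \<in> X"
    using assms(1,3) G_subset nth_mem by fastforce
  then have "dist (f s (f (start_time t xs j) (shadow t xs))) (f s (xs ! j))
      \<le> bowen_dist f t (f (start_time t xs j) (shadow t xs)) (xs ! j)"
    by (intro dist_le_bowen_dist flow_in y(1) assms(4))
  with y show ?thesis
    by (simp add: flow_add)
qed

lemma start_time_nonneg:
  assumes "set xs \<subseteq> {x. (x, t) \<in> G}" "T0 \<le> t" "j < length xs"
  shows "0 \<le> start_time t xs j"
  unfolding start_time_def
  using transition_time_segments[OF assms(1,2)] assms(2,3) T0_pos by (intro sum_nonneg) fastforce

lemma start_time_le:
  assumes "set xs \<subseteq> {x. (x, t) \<in> G}" "T0 \<le> t" "j < length xs"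
  shows "start_time t xs j + t \<le> length xs * (t + \<tau>)"
proof -
  have "start_time t xs j \<le> card {..<j} * (t + \<tau>)"
    unfolding start_time_def
    by (rule sum_bounded_above) (use transition_time_segments[OF assms(1,2)] assms(3) in auto)
  then have "start_time t xs j + t \<le> Suc j * (t + \<tau>)"
    using \<tau>_pos by (simp add: algebra_simps)
  also have "\<dots> \<le> length xs * (t + \<tau>)"
    using assms T0_pos \<tau>_pos by (intro mult_right_mono) auto
  finally show ?thesis .
qed

text \<open>Adding \<open>M\<close> makes the integrand nonnegative, so the disjoint windows carry at most the
  integral over the whole orbit segment.\<close>

lemma sum_Phi_windows_le:
  assumes y: "y \<in> X" and xs: "set xs \<subseteq> {x. (x, t) \<in> G}" "T0 \<le> t"
  shows "(\<Sum>j<length xs. Phi X f \<phi> 0 (f (start_time t xs j) y) t)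
           \<le> Phi X f \<phi> 0 y (length xs * (t + \<tau>)) + length xs * (\<tau> * M)"
proof -
  define n where "n = length xs"
  define T where "T = n * (t + \<tau>)"
  define a where "a j = (if j < n then start_time t xs j else T)" for j
  define g where "g s = \<phi> (f s y) + M" for s
  have t: "0 \<le> t" "0 \<le> T"
    using xs(2) T0_pos \<tau>_pos unfolding T_def by auto
  have window: "integral {a j..a j + t} g = Phi X f \<phi> 0 (f (start_time t xs j) y) t + t * M" if "j < n" for j
    using integral_orbit_window[OF y t(1)] that unfolding a_def g_def by simp
  have "(\<Sum>j<n. integral {a j..a j + t} g) \<le> integral {0..a n} g"
  proof (rule sum_integral_windows_le)
    show "continuous_on UNIV g"
      unfolding g_def by (intro continuous_intros continuous_on_phi_orbit y)
    show "0 \<le> g s" for s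
      using phi_bound[OF flow_in[OF y], of s] unfolding g_def by (simp add: abs_le_iff)
    show "0 \<le> a 0"
      using t unfolding a_def by (simp add: start_time_def)
    show "a j + t \<le> a (Suc j)" if "j < n" for j
      using that start_time_le[OF xs, of j] transition_time_segments[OF xs, of j]
      unfolding a_def n_def T_def by (auto simp: start_time_Suc)
  qed (rule t)
  also have "integral {0..a n} g = Phi X f \<phi> 0 y T + T * M"
    using integral_orbit_window[OF y t(2), of 0] flow_zero[OF y] unfolding a_def g_def by simp
  finally have "(\<Sum>j<n. Phi X f \<phi> 0 (f (start_time t xs j) y) t) + n * (t * M) \<le> Phi X f \<phi> 0 y T + T * M"
    by (simp add: window sum.distrib)
  moreover have "T * M = n * (t * M) + n * (\<tau> * M)"
    unfolding T_def by (simp add: algebra_simps)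
  ultimately show ?thesis
    unfolding n_def T_def by linarith
qed

lemma shadow_weight:
  assumes bowen: "\<forall>(x, s)\<in>G. \<forall>y\<in>bowen_ball X f s x r. \<bar>Phi X f \<phi> 0 x s - Phi X f \<phi> 0 y s\<bar> \<le> K"
    and "\<delta> \<le> r" "\<eta> \<le> r" and xs: "set xs \<subseteq> {x. (x, t) \<in> G}" "T0 \<le> t"
  shows "(\<Sum>j<length xs. Phi X f \<phi> \<eta> (xs ! j) t) - length xs * (2 * K + \<tau> * M)
           \<le> Phi X f \<phi> 0 (shadow t xs) (length xs * (t + \<tau>))"
proof -
  define y where "y = shadow t xs"
  have y: "y \<in> X"
    unfolding y_def by (rule shadow_in[OF xs])
  have "Phi X f \<phi> \<eta> (xs ! j) t \<le> Phi X f \<phi> 0 (f (start_time t xs j) y) t + 2 * K"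
    if "j < length xs" for j
  proof (rule Phi_le_Phi_zero_if_bowen[OF bowen G_subset _ assms(3) flow_in[OF y]])
    show "(xs ! j, t) \<in> G"
      using xs(1) that nth_mem by blast
    have "bowen_dist f t (f (start_time t xs j) y) (xs ! j) < \<delta>"
      using shadow_shadows[OF xs] that unfolding y_def by blast
    then show "bowen_dist f t (xs ! j) (f (start_time t xs j) y) < r"
      using assms(2) bowen_dist_commute[of f t "xs ! j" "f (start_time t xs j) y"] by linarith
  qed
  then have "(\<Sum>j<length xs. Phi X f \<phi> \<eta> (xs ! j) t)
      \<le> (\<Sum>j<length xs. Phi X f \<phi> 0 (f (start_time t xs j) y) t + 2 * K)"
    by (intro sum_mono) simp
  also have "\<dots> = (\<Sum>j<length xs. Phi X f \<phi> 0 (f (start_time t xs j) y) t) + length xs * (2 * K)"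
    by (simp add: sum.distrib)
  finally have "(\<Sum>j<length xs. Phi X f \<phi> \<eta> (xs ! j) t)
      \<le> (\<Sum>j<length xs. Phi X f \<phi> 0 (f (start_time t xs j) y) t) + length xs * (2 * K)" .
  with sum_Phi_windows_le[OF y xs] show ?thesis
    unfolding y_def by (simp add: algebra_simps)
qed

lemma start_time_close:
  assumes xs: "set xs \<subseteq> {x. (x, t) \<in> G}" and qs: "set qs \<subseteq> {x. (x, t) \<in> G}" and "T0 \<le> t"
    and len: "length xs = length qs" "j < length xs" and "take j xs = take j qs"
    and "transition_cell \<rho> t xs = transition_cell \<rho> t qs" "0 < \<rho>"
  shows "\<bar>start_time t xs j - start_time t qs j\<bar> < \<rho>"
proof (cases j)
  case 0
  then show ?thesis
    using assms(8) by (simp add: start_time_def)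
next
  case (Suc i)
  have "take j (segments t xs) = take j (segments t qs)"
    using assms(6) by (simp add: segments_def take_map)
  then have "tau (segments t xs) k = tau (segments t qs) k" if "k < i" for k
    using transition_times_agree[OF set_segments_subset[OF xs assms(3)] set_segments_subset[OF qs assms(3)]]
      that Suc by auto
  then have same_start: "start_time t xs i = start_time t qs i"
    unfolding start_time_def by (intro sum.cong) auto
  have "transition_cell \<rho> t xs ! i = transition_cell \<rho> t qs ! i"
    using assms(7) by simp
  then have "nat \<lfloor>tau (segments t xs) i / \<rho>\<rfloor> = nat \<lfloor>tau (segments t qs) i / \<rho>\<rfloor>"
    using Suc len by (simp add: transition_cell_def)
  moreover have "tau (segments t xs) i \<in> {0..\<tau>}" "tau (segments t qs) i \<in> {0..\<tau>}"
    using transition_time_segments[OF xs assms(3)] transition_time_segments[OF qs assms(3)] Suc len by auto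
  ultimately have "\<bar>tau (segments t xs) i - tau (segments t qs) i\<bar> < \<rho>"
    using abs_diff_less_if_nat_floor_eq assms(8) by auto
  then show ?thesis
    using same_start Suc by (simp add: start_time_Suc)
qed

text \<open>At the first index where the words differ all earlier transition times coincide, so the
  two shadowing orbits pass near the \<open>\<gamma>\<close>-separated points \<open>xs ! j\<close> and \<open>qs ! j\<close> at times less
  than \<open>\<rho>\<close> apart.\<close>

lemma shadow_separated:
  assumes \<rho>: "\<forall>z\<in>X. \<forall>h. \<bar>h\<bar> < \<rho> \<longrightarrow> dist (f h z) z < \<epsilon>" "0 < \<rho>"
    and E: "E \<subseteq> {x. (x, t) \<in> G}" "separated f t \<gamma> E" "T0 \<le> t"
    and words: "xs \<in> words E n" "qs \<in> words E n"
    and "transition_cell \<rho> t xs = transition_cell \<rho> t qs" "xs \<noteq> qs"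
  shows "\<gamma> - 2 * \<delta> - \<epsilon> < bowen_dist f (n * (t + \<tau>)) (shadow t xs) (shadow t qs)"
proof -
  have len: "length xs = n" "length qs = n"
    and sub: "set xs \<subseteq> {x. (x, t) \<in> G}" "set qs \<subseteq> {x. (x, t) \<in> G}"
    using words E(1) by (auto simp: words_def)
  have "\<exists>j<n. take j xs = take j qs \<and> xs ! j \<noteq> qs ! j"
    using first_difference[of xs qs] len assms(9) by simp
  then obtain j where j: "j < n" "take j xs = take j qs" "xs ! j \<noteq> qs ! j"
    by blast
  have "xs ! j \<in> E" "qs ! j \<in> E"
    using j(1) words nth_mem unfolding words_def by auto
  then have "\<gamma> < bowen_dist f t (xs ! j) (qs ! j)" and X: "xs ! j \<in> X" "qs ! j \<in> X"
    using E j(3) G_subset unfolding separated_def by auto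
  then obtain s where s: "s \<in> {0..t}" "\<gamma> < dist (f s (xs ! j)) (f s (qs ! j))"
    using exists_dist_gt_if_bowen_dist_gt E(3) T0_pos by (metis less_le_trans less_imp_le)
  define u where "u = s + start_time t xs j"
  have "dist (f u (shadow t xs)) (f s (xs ! j)) < \<delta>"
    "dist (f (s + start_time t qs j) (shadow t qs)) (f s (qs ! j)) < \<delta>"
    using dist_shadow_less[OF sub(1) E(3)] dist_shadow_less[OF sub(2) E(3)] j(1) len s(1)
    unfolding u_def by auto
  moreover have "\<bar>(s + start_time t qs j) - u\<bar> < \<rho>"
    using start_time_close[OF sub(2,1) E(3), of j \<rho>] len j assms(8) \<rho>(2) unfolding u_def
    by (simp add: abs_minus_commute)
  ultimately have "\<gamma> - 2 * \<delta> - \<epsilon> < dist (f u (shadow t xs)) (f u (shadow t qs))"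
    using dist_gt_if_shadowing[OF \<rho>(1) shadow_in[OF sub(2) E(3)]] s(2) by fastforce
  also have "\<dots> \<le> bowen_dist f (n * (t + \<tau>)) (shadow t xs) (shadow t qs)"
  proof (rule dist_le_bowen_dist[OF shadow_in[OF sub(1) E(3)] shadow_in[OF sub(2) E(3)]])
    show "u \<in> {0..n * (t + \<tau>)}"
      using s(1) start_time_nonneg[OF sub(1) E(3)] start_time_le[OF sub(1) E(3)] j(1) len
      unfolding u_def by fastforce
  qed
  finally show ?thesis .
qed

lemma sum_shadow_weights_cell_le:
  assumes \<rho>: "\<forall>z\<in>X. \<forall>h. \<bar>h\<bar> < \<rho> \<longrightarrow> dist (f h z) z < \<epsilon>" "0 < \<rho>"
    and E: "finite E" "E \<subseteq> {x. (x, t) \<in> G}" "separated f t \<gamma> E" "T0 \<le> t"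
    and "0 < \<gamma> - 2 * \<delta> - \<epsilon>"
  shows "(\<Sum>xs\<in>{xs \<in> words E n. transition_cell \<rho> t xs = l}. exp (Phi X f \<phi> 0 (shadow t xs) (n * (t + \<tau>))))
           \<le> Lambda_full (\<gamma> - 2 * \<delta> - \<epsilon>) (n * (t + \<tau>))"
proof -
  let ?C = "{xs \<in> words E n. transition_cell \<rho> t xs = l}" and ?T = "n * (t + \<tau>)"
  have T: "0 \<le> ?T"
    using E(4) T0_pos \<tau>_pos by simp
  have sep: "\<gamma> - 2 * \<delta> - \<epsilon> < bowen_dist f ?T (shadow t xs) (shadow t qs)"
    if "xs \<in> ?C" "qs \<in> ?C" "xs \<noteq> qs" for xs qs
    using shadow_separated[OF \<rho> E(2-4)] that by auto
  have inj: "inj_on (shadow t) ?C"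
  proof (rule inj_onI, rule ccontr)
    fix xs qs assume "xs \<in> ?C" "qs \<in> ?C" "shadow t xs = shadow t qs" "xs \<noteq> qs"
    then show False
      using sep[of xs qs] bowen_dist_self[OF T, of f "shadow t qs"] assms(7) by simp
  qed
  have "shadow t ` ?C \<subseteq> X"
    using shadow_in E(2,4) by (force simp: words_def)
  moreover have "finite (shadow t ` ?C)"
    using finite_words[OF E(1)] by simp
  moreover have "separated f ?T (\<gamma> - 2 * \<delta> - \<epsilon>) (shadow t ` ?C)"
    unfolding separated_def using sep by blast
  ultimately have "(\<Sum>y\<in>shadow t ` ?C. exp (Phi X f \<phi> 0 y ?T)) \<le> Lambda_full (\<gamma> - 2 * \<delta> - \<epsilon>) ?T"
    by (intro sum_le_Lambda_full assms(7) T)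
  then show ?thesis
    by (simp add: sum.reindex[OF inj])
qed

lemma sum_shadow_weights_le:
  assumes \<rho>: "\<forall>z\<in>X. \<forall>h. \<bar>h\<bar> < \<rho> \<longrightarrow> dist (f h z) z < \<epsilon>" "0 < \<rho>"
    and E: "finite E" "E \<subseteq> {x. (x, t) \<in> G}" "separated f t \<gamma> E" "T0 \<le> t"
    and "0 < \<gamma> - 2 * \<delta> - \<epsilon>"
  shows "(\<Sum>xs\<in>words E n. exp (Phi X f \<phi> 0 (shadow t xs) (n * (t + \<tau>))))
           \<le> (real (nat \<lfloor>\<tau> / \<rho>\<rfloor>) + 1) ^ n * Lambda_full (\<gamma> - 2 * \<delta> - \<epsilon>) (n * (t + \<tau>))"
proof -
  define m where "m = nat \<lfloor>\<tau> / \<rho>\<rfloor>"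
  let ?w = "\<lambda>xs. exp (Phi X f \<phi> 0 (shadow t xs) (n * (t + \<tau>)))"
    and ?L = "Lambda_full (\<gamma> - 2 * \<delta> - \<epsilon>) (n * (t + \<tau>))"
  have "transition_cell \<rho> t xs \<in> words {0..m} (n - 1)" if "xs \<in> words E n" for xs
  proof -
    have "tau (segments t xs) i / \<rho> \<le> \<tau> / \<rho>" if "i < n - 1" for i
      using transition_time_segments[of xs t i] \<open>xs \<in> words E n\<close> E(2,4) that \<rho>(2)
      by (auto simp: words_def divide_right_mono)
    then show ?thesis
      using that unfolding words_def transition_cell_def m_def by (auto intro!: nat_mono floor_mono)
  qed
  then have "(\<Sum>xs\<in>words E n. ?w xs) = (\<Sum>l\<in>words {0..m} (n - 1). \<Sum>xs\<in>{xs \<in> words E n. transition_cell \<rho> t xs = l}. ?w xs)"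
    using finite_words[OF E(1)] finite_words[of "{0..m}"] by (intro sum.group[symmetric]) auto
  also have "\<dots> \<le> (\<Sum>l\<in>words {0..m} (n - 1). ?L)"
    by (intro sum_mono sum_shadow_weights_cell_le assms)
  also have "\<dots> = (real m + 1) ^ (n - 1) * ?L"
    by (simp add: card_words add.commute)
  also have "\<dots> \<le> (real m + 1) ^ n * ?L"
    using sum_le_Lambda_full[of "\<gamma> - 2 * \<delta> - \<epsilon>" "n * (t + \<tau>)" "{}"] assms(7) E(4) T0_pos \<tau>_pos
    by (intro mult_right_mono power_increasing) (auto simp: separated_def)
  finally show ?thesis
    unfolding m_def .
qed

lemma power_sum_weights_le:
  assumes bowen: "\<forall>(x, s)\<in>G. \<forall>y\<in>bowen_ball X f s x r. \<bar>Phi X f \<phi> 0 x s - Phi X f \<phi> 0 y s\<bar> \<le> K"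
    and "\<delta> \<le> r" "\<eta> \<le> r"
    and \<rho>: "\<forall>z\<in>X. \<forall>h. \<bar>h\<bar> < \<rho> \<longrightarrow> dist (f h z) z < \<epsilon>" "0 < \<rho>"
    and E: "finite E" "E \<subseteq> {x. (x, t) \<in> G}" "separated f t \<gamma> E" "T0 \<le> t"
    and "0 < \<gamma> - 2 * \<delta> - \<epsilon>"
  shows "exp (- (n * (2 * K + \<tau> * M))) * (\<Sum>x\<in>E. exp (Phi X f \<phi> \<eta> x t)) ^ n
           \<le> (real (nat \<lfloor>\<tau> / \<rho>\<rfloor>) + 1) ^ n * Lambda_full (\<gamma> - 2 * \<delta> - \<epsilon>) (n * (t + \<tau>))"
proof -
  have "exp (- (n * (2 * K + \<tau> * M))) * (\<Sum>x\<in>E. exp (Phi X f \<phi> \<eta> x t)) ^ n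
      = (\<Sum>xs\<in>words E n. exp (- (n * (2 * K + \<tau> * M))) * exp (\<Sum>j<n. Phi X f \<phi> \<eta> (xs ! j) t))"
    by (simp add: power_sum_eq_sum_words[OF E(1)] sum_distrib_left exp_sum)
  also have "\<dots> = (\<Sum>xs\<in>words E n. exp ((\<Sum>j<n. Phi X f \<phi> \<eta> (xs ! j) t) - n * (2 * K + \<tau> * M)))"
    by (simp add: mult_exp_exp)
  also have "\<dots> \<le> (\<Sum>xs\<in>words E n. exp (Phi X f \<phi> 0 (shadow t xs) (n * (t + \<tau>))))"
    using shadow_weight[OF bowen assms(2,3) _ E(4)] E(2) by (intro sum_mono) (force simp: words_def)
  also have "\<dots> \<le> (real (nat \<lfloor>\<tau> / \<rho>\<rfloor>) + 1) ^ n * Lambda_full (\<gamma> - 2 * \<delta> - \<epsilon>) (n * (t + \<tau>))"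
    by (rule sum_shadow_weights_le[OF \<rho> E assms(10)])
  finally show ?thesis .
qed

lemma ln_sum_weights_le_pressure_at_scale:
  assumes bowen: "\<forall>(x, s)\<in>G. \<forall>y\<in>bowen_ball X f s x r. \<bar>Phi X f \<phi> 0 x s - Phi X f \<phi> 0 y s\<bar> \<le> K"
    and "\<delta> \<le> r" "\<eta> \<le> r"
    and \<rho>: "\<forall>z\<in>X. \<forall>h. \<bar>h\<bar> < \<rho> \<longrightarrow> dist (f h z) z < \<epsilon>" "0 < \<rho>"
    and E: "finite E" "E \<subseteq> {x. (x, t) \<in> G}" "separated f t \<gamma> E" "T0 \<le> t"
    and "0 < \<gamma> - 2 * \<delta> - \<epsilon>" "E \<noteq> {}"
  shows "ereal ((ln (\<Sum>x\<in>E. exp (Phi X f \<phi> \<eta> x t)) - (2 * K + \<tau> * M + ln (real (nat \<lfloor>\<tau> / \<rho>\<rfloor>) + 1)))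
           / (t + \<tau>)) \<le> pressure_at_scale (\<gamma> - 2 * \<delta> - \<epsilon>)"
proof -
  define S c m L where "S = (\<Sum>x\<in>E. exp (Phi X f \<phi> \<eta> x t))" and "c = 2 * K + \<tau> * M"
    and "m = real (nat \<lfloor>\<tau> / \<rho>\<rfloor>) + 1" and "L = Lambda_full (\<gamma> - 2 * \<delta> - \<epsilon>)"
  define q where "q = (ln S - c - ln m) / (t + \<tau>)"
  have pos: "0 < S" "0 < m" "0 < t + \<tau>"
    using E(1,4) assms(11) T0_pos \<tau>_pos unfolding S_def m_def by (auto intro: sum_pos)
  then have q: "q * (t + \<tau>) = ln S - c - ln m"
    unfolding q_def by simp
  have scaled: "q \<le> ln (L (n * (t + \<tau>))) / (n * (t + \<tau>))" if "1 \<le> n" for n :: nat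
  proof -
    have "n * (ln S - c - ln m) \<le> ln (L (n * (t + \<tau>)))"
      using power_sum_weights_le[OF bowen assms(2,3) \<rho> E assms(10)] pos
      unfolding S_def c_def m_def L_def by (intro mult_ln_le_ln_if_power_le)
    moreover have "q * (n * (t + \<tau>)) = n * (ln S - c - ln m)"
      using q by (metis mult.left_commute)
    ultimately have "q * (n * (t + \<tau>)) \<le> ln (L (n * (t + \<tau>)))"
      by linarith
    moreover have "0 < n * (t + \<tau>)"
      using pos that by simp
    ultimately show ?thesis
      by (simp only: pos_le_divide_eq)
  qed
  have "ereal q \<le> pressure_at_scale (\<gamma> - 2 * \<delta> - \<epsilon>)"
    unfolding pressure_at_scale_def L_def[symmetric]
  proof (intro le_Limsup_at_top_if_cofinal)
    fix N :: real
    define n where "n = nat \<lceil>N / (t + \<tau>)\<rceil> + 1"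
    have "N / (t + \<tau>) \<le> n"
      unfolding n_def by linarith
    then have "N \<le> n * (t + \<tau>)"
      using pos(3) by (simp add: divide_le_eq)
    with scaled[of n] show "\<exists>T\<ge>N. ereal q \<le> ereal (ln (L T) / T)"
      unfolding n_def by fastforce
  qed
  then show ?thesis
    unfolding q_def S_def c_def m_def by (simp add: algebra_simps)
qed

lemma sum_weights_le_exp_pressure:
  assumes bowen: "\<forall>(x, s)\<in>G. \<forall>y\<in>bowen_ball X f s x r. \<bar>Phi X f \<phi> 0 x s - Phi X f \<phi> 0 y s\<bar> \<le> K"
    and "\<delta> \<le> r" "\<eta> \<le> r" "2 * \<delta> < \<gamma>" "top_pressure X f \<phi> < \<infinity>"
  obtains C where "\<And>t E. T0 \<le> t \<Longrightarrow> finite E \<Longrightarrow> E \<subseteq> {x. (x, t) \<in> G} \<Longrightarrow> separated f t \<gamma> E \<Longrightarrow>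
    (\<Sum>x\<in>E. exp (Phi X f \<phi> \<eta> x t)) \<le> C * exp (t * real_of_ereal (top_pressure X f \<phi>))"
proof -
  define \<epsilon> where "\<epsilon> = (\<gamma> - 2 * \<delta>) / 2"
  have \<epsilon>: "0 < \<epsilon>" "\<gamma> - 2 * \<delta> - \<epsilon> = \<epsilon>"
    using assms(4) unfolding \<epsilon>_def by (auto simp: field_simps)
  obtain \<rho> where \<rho>: "0 < \<rho>" "\<forall>z\<in>X. \<forall>h. \<bar>h\<bar> < \<rho> \<longrightarrow> dist (f h z) z < \<epsilon>"
    using flow_close_for_small_time[OF \<epsilon>(1)] by blast
  define p c where "p = real_of_ereal (top_pressure X f \<phi>)"
    and "c = 2 * K + \<tau> * M + ln (real (nat \<lfloor>\<tau> / \<rho>\<rfloor>) + 1)"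
  have "(\<Sum>x\<in>E. exp (Phi X f \<phi> \<eta> x t)) \<le> exp (c + \<tau> * p) * exp (t * p)"
    if t: "T0 \<le> t" and E: "finite E" "E \<subseteq> {x. (x, t) \<in> G}" "separated f t \<gamma> E" for t E
  proof (cases "E = {}")
    case False
    let ?S = "\<Sum>x\<in>E. exp (Phi X f \<phi> \<eta> x t)"
    have "X \<noteq> {}"
      using False E(2) G_subset by auto
    have "ereal ((ln ?S - c) / (t + \<tau>)) \<le> pressure_at_scale \<epsilon>"
      using ln_sum_weights_le_pressure_at_scale[OF bowen assms(2,3) \<rho>(2,1) E t] \<epsilon> False
      unfolding c_def by simp
    also have "\<dots> \<le> top_pressure X f \<phi>"
      by (rule pressure_at_scale_le_top_pressure[OF \<open>X \<noteq> {}\<close> \<epsilon>(1)])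
    finally have "(ln ?S - c) / (t + \<tau>) \<le> p"
      using assms(5) unfolding p_def by (cases "top_pressure X f \<phi>") auto
    then have ln_S: "ln ?S \<le> c + \<tau> * p + t * p"
      using t T0_pos \<tau>_pos by (simp add: divide_le_eq algebra_simps)
    have "0 < ?S"
      using E(1) False by (intro sum_pos) auto
    then have "?S = exp (ln ?S)"
      by simp
    also have "\<dots> \<le> exp (c + \<tau> * p + t * p)"
      using ln_S by simp
    also have "\<dots> = exp (c + \<tau> * p) * exp (t * p)"
      by (simp add: exp_add)
    finally show ?thesis .
  qed simp
  then show ?thesis
    unfolding p_def by (rule that)
qed


lemma Lambda_le_exp_pressure:
  assumes bowen: "\<forall>(x, s)\<in>G. \<forall>y\<in>bowen_ball X f s x r. \<bar>Phi X f \<phi> 0 x s - Phi X f \<phi> 0 y s\<bar> \<le> K"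
    and "\<delta> \<le> r" "\<eta> \<le> r" "0 < \<delta>" "2 * \<delta> < \<gamma>" "top_pressure X f \<phi> < \<infinity>"
  obtains C where "\<And>t. 0 \<le> t \<Longrightarrow> Lambda X f \<phi> G \<gamma> \<eta> t \<le> C * exp (t * real_of_ereal (top_pressure X f \<phi>))"
proof -
  let ?p = "real_of_ereal (top_pressure X f \<phi>)"
  obtain C1 where large_times: "\<And>t E. T0 \<le> t \<Longrightarrow> finite E \<Longrightarrow> E \<subseteq> {x. (x, t) \<in> G} \<Longrightarrow>
      separated f t \<gamma> E \<Longrightarrow> (\<Sum>x\<in>E. exp (Phi X f \<phi> \<eta> x t)) \<le> C1 * exp (t * ?p)"
    using sum_weights_le_exp_pressure[OF bowen assms(2,3,5,6)] by blast
  have "0 < \<gamma>"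
    using assms(4,5) by simp
  then obtain C2 where small_times: "\<And>t E. t \<in> {0..T0} \<Longrightarrow> E \<subseteq> X \<Longrightarrow> separated f t \<gamma> E \<Longrightarrow>
      (\<Sum>x\<in>E. exp (Phi X f \<phi> \<eta> x t)) \<le> C2 * exp (t * ?p)"
    using sum_weights_le_exp_bounded_times by blast
  have "Lambda X f \<phi> G \<gamma> \<eta> t \<le> max C1 C2 * exp (t * ?p)" if "0 \<le> t" for t
  proof (rule Lambda_leI)
    fix E assume E: "finite E" "E \<subseteq> {x. (x, t) \<in> G}" "separated f t \<gamma> E"
    have "(\<Sum>x\<in>E. exp (Phi X f \<phi> \<eta> x t)) \<le> C1 * exp (t * ?p) \<or>
        (\<Sum>x\<in>E. exp (Phi X f \<phi> \<eta> x t)) \<le> C2 * exp (t * ?p)"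
    proof (cases "T0 \<le> t")
      case True
      then show ?thesis
        using large_times[OF True E] by blast
    next
      case False
      have "E \<subseteq> X"
        using E(2) G_subset by auto
      with False that show ?thesis
        using small_times[OF _ _ E(3)] by simp
    qed
    moreover have "C1 * exp (t * ?p) \<le> max C1 C2 * exp (t * ?p)" "C2 * exp (t * ?p) \<le> max C1 C2 * exp (t * ?p)"
      by (simp_all add: mult_right_mono)
    ultimately show "(\<Sum>x\<in>E. exp (Phi X f \<phi> \<eta> x t)) \<le> max C1 C2 * exp (t * ?p)"
      by linarith
  qed
  then show ?thesis
    by (rule that)
qed

end

lemma (in compact_flow) specified_flow_if_W_spec:
  assumes "W_spec X f (G \<inter> (X \<times> {T0..})) \<delta>" "G \<subseteq> X \<times> {0..}" "0 < T0"
  shows "\<exists>\<tau> tau. specified_flow X f \<phi> M G \<delta> T0 \<tau> tau"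
proof -
  obtain \<tau> tau where "0 < \<tau>"
    and spec: "\<forall>ps. set ps \<subseteq> G \<inter> (X \<times> {T0..}) \<longrightarrow>
      (\<forall>i. i + 1 < length ps \<longrightarrow> tau ps i \<in> {0..\<tau>}) \<and>
      (\<exists>y\<in>X. \<forall>j<length ps.
         bowen_dist f (snd (ps ! j)) (f (\<Sum>i<j. snd (ps ! i) + tau ps i) y) (fst (ps ! j)) < \<delta>)"
    and agree: "\<forall>ps qs j. set ps \<subseteq> G \<inter> (X \<times> {T0..}) \<longrightarrow> set qs \<subseteq> G \<inter> (X \<times> {T0..}) \<longrightarrow>
      take j ps = take j qs \<longrightarrow> (\<forall>i. i + 1 < j \<longrightarrow> tau ps i = tau qs i)"
    using assms(1) unfolding W_spec_def by blast
  have "specified_flow X f \<phi> M G \<delta> T0 \<tau> tau"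
    by (intro specified_flow.intro specified_flow_axioms.intro compact_flow_axioms)
      (use \<open>0 < \<tau>\<close> spec agree assms(2,3) in blast)+
  then show ?thesis
    by blast
qed

theorem proposition4p7:
  fixes X :: "'a::metric_space set" and f :: "real \<Rightarrow> 'a \<Rightarrow> 'a" and \<phi> :: "'a \<Rightarrow> real"
    and G :: "('a \<times> real) set" and \<delta> \<gamma> \<eta> :: real
  assumes "compact X"
    and "continuous_flow X f"
    and "continuous_on X \<phi>"
    and "G \<subseteq> X \<times> {0..}"
    and "\<delta> > 0"
    and "tail_W_spec X f G \<delta>"
    and "\<gamma> > 2 * \<delta>"
    and "\<eta> \<ge> 0"
    and "bowen_property X f \<phi> G (max (\<gamma> / 2) \<eta>)"
  shows "\<exists>C4. \<forall>t\<ge>0. top_pressure X f \<phi> < \<infinity> \<longrightarrow>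
           Lambda X f \<phi> G \<gamma> \<eta> t \<le> C4 * exp (t * real_of_ereal (top_pressure X f \<phi>))"
proof (cases "top_pressure X f \<phi> < \<infinity>")
  case True
  obtain M where "\<forall>z\<in>\<phi> ` X. \<bar>z\<bar> \<le> M"
    using compact_imp_bounded[OF compact_continuous_image[OF assms(3,1)]] unfolding bounded_real by blast
  then interpret compact_flow X f \<phi> M
    using assms(1-3) by unfold_locales auto
  obtain T0 where "0 < T0" "W_spec X f (G \<inter> (X \<times> {T0..})) \<delta>"
    using assms(6) unfolding tail_W_spec_def by blast
  then obtain \<tau> tau where "specified_flow X f \<phi> M G \<delta> T0 \<tau> tau"
    using specified_flow_if_W_spec assms(4) by blast
  then interpret specified_flow X f \<phi> M G \<delta> T0 \<tau> tau .
  obtain K where bowen: "\<forall>(x, t)\<in>G. \<forall>y\<in>bowen_ball X f t x (max (\<gamma> / 2) \<eta>).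
      \<bar>Phi X f \<phi> 0 x t - Phi X f \<phi> 0 y t\<bar> \<le> K"
    using assms(9) unfolding bowen_property_def by blast
  have scales: "\<delta> \<le> max (\<gamma> / 2) \<eta>" "\<eta> \<le> max (\<gamma> / 2) \<eta>"
    using assms(7) by auto
  obtain C where "\<And>t. 0 \<le> t \<Longrightarrow>
      Lambda X f \<phi> G \<gamma> \<eta> t \<le> C * exp (t * real_of_ereal (top_pressure X f \<phi>))"
    using Lambda_le_exp_pressure[OF bowen scales assms(5,7) True] by blast
  then show ?thesis
    by blast
qed simp

end
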